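(* Let $(A^{\mathbb N},\mathbb B_\Pi(A^{\mathbb N}),m,\sigma)$ be a Markov shift over $A=\{0,1,\dots,l\}$ and let $\mathcal P=\{P_0,\dots,P_n\}\subset\mathbb B_\Pi(A^{\mathbb N})$ be a partition of $A^{\mathbb N}$ such that: (i) each $P_i$ is either a subset of some cylinder $C_a$, $a\in A$, or satisfies $\sigma^{-1}(P_i)=P_i$ and $m(P_i)=0$; (ii) for any $P_i,P_j\in\mathcal P$, either $P_i\cap\sigma^{-1}(P_j)=C_a\cap\sigma^{-1}(P_j)$ for some $a\in A$, or $m(P_i\cap\sigma^{-1}(P_j))=0$. Then $\mathcal P$ is generating and has the Markov property.
   Context: Markov shift over $A=\{0,\dots,l\}$: given an $(l+1)\times(l+1)$ stochastic matrix $Q=(q_{ij})$ and a stationary probability vector $p$ of $Q$ with all $p_a>0$, it is $(A^{\mathbb N},\mathbb B_\Pi(A^{\mathbb N}),m,\sigma)$ with $A^{\mathbb N}$ the one-sided sequences $s=(s_0,s_1,\dots)$, $\mathbb B_\Pi$ generated by cylinders $C_{a_0\dots a_{n-1}}=\{s: s_i=a_i, i<n\}$, $(\sigma s)_j=s_{j+1}$, and $m(C_{a_0\dots a_{n-1}})=p_{a_0}q_{a_0a_1}\cdots q_{a_{n-2}a_{n-1}}$. A finite measurable partition $\mathcal G=\{G_0,\dots,G_r\}$ is generating if for every measurable $B$ there is $A'$ in the $\sigma$-algebra generated by the sets $\sigma^{-k}(G_i)$, $k\in\mathbb N_0$, with $m(A'\triangle B)=0$. A finite partition $\mathcal M=\{M_0,\dots,M_r\}$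 has the Markov property if for all $n\in\mathbb N$ and $i_0,\dots,i_n$ with $m(M_{i_0}\cap\sigma^{-1}M_{i_1}\cap\dots\cap\sigma^{-(n-1)}M_{i_{n-1}})>0$, $\frac{m(M_{i_0}\cap\sigma^{-1}M_{i_1}\cap\dots\cap\sigma^{-n}M_{i_n})}{m(M_{i_0}\cap\dots\cap\sigma^{-(n-1)}M_{i_{n-1}})}=\frac{m(M_{i_{n-1}}\cap\sigma^{-1}M_{i_n})}{m(M_{i_{n-1}})}$. *)

theory Defs
  imports "HOL-Probability.Probability"
begin

text \<open>Alphabet A = {0..l}; sequence space A^N as functions nat => nat with values <= l.\<close>

definition seq_space :: "nat \<Rightarrow> (nat \<Rightarrow> nat) set" where
  "seq_space l = {s. \<forall>i. s i \<le> l}"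

definition cyl :: "nat \<Rightarrow> nat list \<Rightarrow> (nat \<Rightarrow> nat) set" where
  "cyl l w = {s \<in> seq_space l. \<forall>i<length w. s i = w ! i}"

definition cylinders :: "nat \<Rightarrow> (nat \<Rightarrow> nat) set set" where
  "cylinders l = {cyl l w | w. w \<noteq> [] \<and> set w \<subseteq> {..l}}"

definition shift :: "(nat \<Rightarrow> nat) \<Rightarrow> (nat \<Rightarrow> nat)" where
  "shift s = (\<lambda>j. s (Suc j))"

definition shift_pre :: "nat \<Rightarrow> nat \<Rightarrow> (nat \<Rightarrow> nat) set \<Rightarrow> (nat \<Rightarrow> nat) set" where
  "shift_pre l k B = (shift ^^ k) -` B \<inter> seq_space l"

definition markov_shift ::
  "nat \<Rightarrow> (nat \<Rightarrow> nat \<Rightarrow> real) \<Rightarrow> (nat \<Rightarrow> real) \<Rightarrow> (nat \<Rightarrow> nat) measure \<Rightarrow> bool" where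
  "markov_shift l Q p m \<longleftrightarrow>
     (\<forall>i\<le>l. \<forall>j\<le>l. 0 \<le> Q i j) \<and>
     (\<forall>i\<le>l. (\<Sum>j\<le>l. Q i j) = 1) \<and>
     (\<forall>a\<le>l. 0 < p a) \<and>
     (\<Sum>a\<le>l. p a) = 1 \<and>
     (\<forall>j\<le>l. (\<Sum>i\<le>l. p i * Q i j) = p j) \<and>
     space m = seq_space l \<and>
     sets m = sigma_sets (seq_space l) (cylinders l) \<and>
     (\<forall>w. w \<noteq> [] \<and> set w \<subseteq> {..l} \<longrightarrow>
        emeasure m (cyl l w) =
          ennreal (p (w ! 0) * (\<Prod>i<length w - 1. Q (w ! i) (w ! Suc i))))"

definition is_partition :: "nat \<Rightarrow> (nat \<Rightarrow> nat) measure \<Rightarrow> nat \<Rightarrow> (nat \<Rightarrow> (nat \<Rightarrow> nat) set) \<Rightarrow> bool" where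
  "is_partition l m n P \<longleftrightarrow>
     (\<forall>i\<le>n. P i \<in> sets m) \<and>
     (\<forall>i\<le>n. \<forall>j\<le>n. i \<noteq> j \<longrightarrow> P i \<inter> P j = {}) \<and>
     (\<Union>i\<le>n. P i) = seq_space l"

definition generating :: "nat \<Rightarrow> (nat \<Rightarrow> nat) measure \<Rightarrow> nat \<Rightarrow> (nat \<Rightarrow> (nat \<Rightarrow> nat) set) \<Rightarrow> bool" where
  "generating l m n G \<longleftrightarrow>
     (\<forall>B \<in> sets m. \<exists>A' \<in> sigma_sets (seq_space l) {shift_pre l k (G i) | k i. i \<le> n}.
        measure m ((A' - B) \<union> (B - A')) = 0)"

definition markov_property :: "nat \<Rightarrow> (nat \<Rightarrow> nat) measure \<Rightarrow> nat \<Rightarrow> (nat \<Rightarrow> (nat \<Rightarrow> nat) set) \<Rightarrow> bool" where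
  "markov_property l m r M \<longleftrightarrow>
     (\<forall>N::nat. \<forall>idx::nat \<Rightarrow> nat. N \<ge> 1 \<longrightarrow> (\<forall>k\<le>N. idx k \<le> r) \<longrightarrow>
        measure m (\<Inter>k<N. shift_pre l k (M (idx k))) > 0 \<longrightarrow>
        measure m (\<Inter>k\<le>N. shift_pre l k (M (idx k))) / measure m (\<Inter>k<N. shift_pre l k (M (idx k)))
        = measure m (M (idx (N - 1)) \<inter> shift_pre l 1 (M (idx N))) / measure m (M (idx (N - 1))))"

end

theory Submission
  imports Defs
begin

section \<open>The shift on sequences and cylinders\<close>

lemma funpow_shift: "(shift ^^ k) s = (\<lambda>j. s (j + k))"
  by (induction k arbitrary: s) (auto simp: shift_def)

lemma shift_space: "s \<in> seq_space l \<Longrightarrow> (shift ^^ k) s \<in> seq_space l"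
  by (simp add: funpow_shift seq_space_def)

lemma shift_pre_0: "shift_pre l 0 B = B \<inter> seq_space l"
  by (simp add: shift_pre_def)

lemma shift_pre_shift_pre: "shift_pre l j (shift_pre l k B) = shift_pre l (j + k) B"
  unfolding shift_pre_def by (auto simp: funpow_shift seq_space_def add_ac)

lemma shift_pre_Int: "shift_pre l k (A \<inter> B) = shift_pre l k A \<inter> shift_pre l k B"
  by (auto simp: shift_pre_def)

lemma shift_pre_UN: "shift_pre l k (\<Union>i\<in>I. A i) = (\<Union>i\<in>I. shift_pre l k (A i))"
  by (auto simp: shift_pre_def)

lemma cyl_subset: "cyl l w \<subseteq> seq_space l"
  by (auto simp: cyl_def)

lemma cyl_Nil: "cyl l [] = seq_space l"
  by (auto simp: cyl_def)

lemma cyl_Int: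
  assumes "length v \<le> length u"
  shows "cyl l v \<inter> cyl l u = (if (\<forall>i<length v. v ! i = u ! i) then cyl l u else {})"
  using assms by (auto simp: cyl_def)

lemma cyl_singleton_Int_cyl:
  assumes "v \<noteq> []"
  shows "cyl l [c] \<inter> cyl l v = (if hd v = c then cyl l v else {})"
  using assms cyl_Int[of "[c]" v l] by (cases v) auto

lemma cyl_append: "cyl l w \<inter> shift_pre l (length w) (cyl l v) = cyl l (w @ v)"
proof (intro set_eqI iffI)
  fix s assume "s \<in> cyl l (w @ v)"
  then show "s \<in> cyl l w \<inter> shift_pre l (length w) (cyl l v)"
    by (auto simp: cyl_def shift_pre_def funpow_shift seq_space_def nth_append)
next
  fix s assume s: "s \<in> cyl l w \<inter> shift_pre l (length w) (cyl l v)"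
  show "s \<in> cyl l (w @ v)"
    unfolding cyl_def
  proof (intro CollectI conjI allI impI)
    show "s \<in> seq_space l" using s by (simp add: shift_pre_def)
    fix i assume i: "i < length (w @ v)"
    show "s i = (w @ v) ! i"
    proof (cases "i < length w")
      case True then show ?thesis using s by (simp add: cyl_def nth_append)
    next
      case False
      then obtain j where "i = j + length w" "j < length v"
        using i by (metis add.commute le_add_diff_inverse length_append nat_add_left_cancel_less not_less)
      then show ?thesis using s by (simp add: cyl_def shift_pre_def funpow_shift nth_append)
    qed
  qed
qed

lemma cyl_snoc_Int: "cyl l (w @ [c]) \<inter> shift_pre l (length w) B
    = cyl l w \<inter> shift_pre l (length w) (cyl l [c] \<inter> B)"
  by (simp add: cyl_append[symmetric] shift_pre_Int Int_assoc)

lemma cyl_as_Inter: "cyl l w = seq_space l \<inter> (\<Inter>k<length w. shift_pre l k (cyl l [w ! k]))"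
  by (auto simp: cyl_def shift_pre_def funpow_shift seq_space_def)

lemma Inter_shift_pre_chain:
  assumes trans: "\<And>k. k < j \<Longrightarrow>
      Y k \<inter> shift_pre l 1 (Y (Suc k)) = cyl l [a k] \<inter> shift_pre l 1 (Y (Suc k))"
  shows "(\<Inter>k\<le>j. shift_pre l k (Y k)) = cyl l (map a [0..<j]) \<inter> shift_pre l j (Y j)"
  using trans
proof (induction j)
  case 0
  then show ?case by (auto simp: cyl_Nil shift_pre_0)
next
  case (Suc j)
  have IH: "(\<Inter>k\<le>j. shift_pre l k (Y k)) = cyl l (map a [0..<j]) \<inter> shift_pre l j (Y j)"
    by (rule Suc.IH, rule Suc.prems) simp
  have "(\<Inter>k\<le>Suc j. shift_pre l k (Y k))
      = cyl l (map a [0..<j]) \<inter> shift_pre l j (Y j \<inter> shift_pre l 1 (Y (Suc j)))"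
    by (simp add: IH atMost_Suc shift_pre_Int shift_pre_shift_pre Int_ac)
  also have "\<dots> = cyl l (map a [0..<j]) \<inter> shift_pre l j (cyl l [a j] \<inter> shift_pre l 1 (Y (Suc j)))"
    using Suc.prems[of j] by simp
  also have "\<dots> = cyl l (map a [0..<j]) \<inter> shift_pre l j (cyl l [a j])
      \<inter> shift_pre l (Suc j) (Y (Suc j))"
    by (simp add: shift_pre_Int shift_pre_shift_pre Int_assoc)
  also have "\<dots> = cyl l (map a [0..<Suc j]) \<inter> shift_pre l (Suc j) (Y (Suc j))"
    using cyl_append[of l "map a [0..<j]" "[a j]"] by simp
  finally show ?case .
qed

text \<open>\<open>qp Q w\<close> is the product of the transition probabilities along the word \<open>w\<close>;
  \<open>mu Q p w\<close> is the Markov weight of the cylinder over \<open>w\<close>.\<close>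
fun qp :: "(nat \<Rightarrow> nat \<Rightarrow> real) \<Rightarrow> nat list \<Rightarrow> real" where
  "qp Q (a # b # w) = Q a b * qp Q (b # w)"
| "qp Q _ = 1"

definition mu :: "(nat \<Rightarrow> nat \<Rightarrow> real) \<Rightarrow> (nat \<Rightarrow> real) \<Rightarrow> nat list \<Rightarrow> real" where
  "mu Q p w = p (w ! 0) * qp Q w"

lemma prod_qp: "(\<Prod>i<length w - 1. Q (w!i) (w!Suc i)) = qp Q w"
proof (induction Q w rule: qp.induct)
  case (1 Q a b w)
  have "(\<Prod>i<length (a # b # w) - 1. Q ((a # b # w) ! i) ((a # b # w) ! Suc i))
       = Q a b * (\<Prod>i<length (b # w) - 1. Q ((b # w) ! i) ((b # w) ! Suc i))"
    by (simp add: prod.lessThan_Suc_shift del: prod.lessThan_Suc)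
  then show ?case using 1 by simp
qed auto

lemma qp_append: "v \<noteq> [] \<Longrightarrow> qp Q (w @ v) = qp Q (w @ [hd v]) * qp Q v"
proof (induction w)
  case (Cons a w)
  then show ?case by (cases w; cases v) auto
qed simp

lemma qp_nonneg: "(\<forall>i\<le>l. \<forall>j\<le>l. 0 \<le> Q i j) \<Longrightarrow> set w \<subseteq> {..l} \<Longrightarrow> 0 \<le> qp Q w"
  by (induction Q w rule: qp.induct) auto

text \<open>The weight of a concatenation factorises through the joining symbol \<open>c\<close>:
  this is the Markov property of the weights themselves.\<close>
lemma mu_append:
  assumes "v \<noteq> []" "hd v = c" "p c \<noteq> 0"
  shows "mu Q p (w @ v) = mu Q p (w @ [c]) / p c * mu Q p v"
proof -
  have "(w @ v) ! 0 = (w @ [c]) ! 0" "v ! 0 = c"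
    using assms by (cases w; cases v; simp)+
  then show ?thesis using assms qp_append[OF assms(1), of Q w] by (simp add: mu_def field_simps)
qed

section \<open>The Markov measure\<close>

locale markov_measure =
  fixes l :: nat and Q :: "nat \<Rightarrow> nat \<Rightarrow> real" and p :: "nat \<Rightarrow> real"
    and m :: "(nat \<Rightarrow> nat) measure"
  assumes ms: "markov_shift l Q p m"
begin

lemma Q_nonneg: "\<forall>i\<le>l. \<forall>j\<le>l. 0 \<le> Q i j" using ms by (simp add: markov_shift_def)
lemma p_pos: "a \<le> l \<Longrightarrow> 0 < p a" using ms by (simp add: markov_shift_def)
lemma p_sum: "(\<Sum>a\<le>l. p a) = 1" using ms by (simp add: markov_shift_def)
lemma p_stationary: "j \<le> l \<Longrightarrow> (\<Sum>i\<le>l. p i * Q i j) = p j" using ms by (simp add: markov_shift_def)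
lemma space_m: "space m = seq_space l" using ms by (simp add: markov_shift_def)
lemma sets_m: "sets m = sigma_sets (seq_space l) (cylinders l)" using ms by (simp add: markov_shift_def)

lemma emeasure_cyl: "w \<noteq> [] \<Longrightarrow> set w \<subseteq> {..l} \<Longrightarrow> emeasure m (cyl l w) = ennreal (mu Q p w)"
  using ms by (simp add: markov_shift_def mu_def prod_qp[simplified])

lemma mu_nonneg: "w \<noteq> [] \<Longrightarrow> set w \<subseteq> {..l} \<Longrightarrow> 0 \<le> mu Q p w"
  unfolding mu_def using qp_nonneg[OF Q_nonneg] p_pos
  by (metis hd_conv_nth hd_in_set atMost_iff in_mono less_imp_le mult_nonneg_nonneg)

text \<open>Every cylinder is measurable, also for words leaving the alphabet (then it is empty).\<close>
lemma cyl_sets: "cyl l w \<in> sets m"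
proof (cases "w \<noteq> [] \<and> set w \<subseteq> {..l}")
  case True
  then show ?thesis by (auto simp: sets_m cylinders_def)
next
  case False
  then consider "w = []" | i where "i < length w" "w ! i > l"
    by (metis atMost_iff in_set_conv_nth not_le subsetI)
  then show ?thesis
  proof cases
    case 1 then show ?thesis using sets.top[of m] by (simp add: cyl_Nil space_m)
  next
    case 2
    then have "cyl l w = {}" by (auto simp: cyl_def seq_space_def) (metis not_le)
    then show ?thesis by simp
  qed
qed

lemma space_cyl: "seq_space l = (\<Union>a\<le>l. cyl l [a])"
  by (auto simp: cyl_def seq_space_def)

lemma prob_space_m: "prob_space m"
proof (rule prob_spaceI)
  have disj: "disjoint_family_on (\<lambda>a. cyl l [a]) {..l}"
    by (auto simp: disjoint_family_on_def cyl_def)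
  have "emeasure m (space m) = emeasure m (\<Union>a\<le>l. cyl l [a])"
    using space_cyl space_m by simp
  also have "\<dots> = (\<Sum>a\<le>l. emeasure m (cyl l [a]))"
    using disj by (subst sum_emeasure[symmetric]) (auto simp: cyl_sets)
  also have "\<dots> = (\<Sum>a\<le>l. ennreal (p a))"
    by (intro sum.cong refl) (simp add: emeasure_cyl mu_def)
  also have "\<dots> = ennreal (\<Sum>a\<le>l. p a)"
    using p_pos by (subst sum_ennreal) (auto intro: less_imp_le)
  finally show "emeasure m (space m) = 1" using p_sum by simp
qed

lemma finite_measure_m: "finite_measure m"
  using prob_space_m by (simp add: prob_space_def)

lemma measure_mono_m: "A \<subseteq> B \<Longrightarrow> B \<in> sets m \<Longrightarrow> measure m A \<le> measure m B"
  by (rule finite_measure.finite_measure_mono[OF finite_measure_m])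

lemma measure_zero_null: "B \<in> sets m \<Longrightarrow> measure m B = 0 \<Longrightarrow> B \<in> null_sets m"
  using finite_measure.emeasure_eq_measure[OF finite_measure_m] by (intro null_setsI) auto

lemma shift_vimage_cyl: "shift -` cyl l v \<inter> seq_space l = (\<Union>a\<le>l. cyl l (a # v))"
proof (intro equalityI subsetI)
  fix x assume x: "x \<in> shift -` cyl l v \<inter> seq_space l"
  show "x \<in> (\<Union>a\<le>l. cyl l (a # v))"
  proof (rule UN_I[of "x 0"])
    show "x 0 \<in> {..l}" using x by (auto simp: seq_space_def)
    show "x \<in> cyl l (x 0 # v)" using x
      by (auto simp: cyl_def shift_def seq_space_def nth_Cons split: nat.split)
  qed
qed (auto simp: cyl_def seq_space_def shift_def)

lemma shift_measurable: "shift \<in> measurable m m"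
proof (rule measurable_sigma_sets[OF sets_m])
  show "cylinders l \<subseteq> Pow (seq_space l)" by (auto simp: cylinders_def cyl_def)
  show "shift \<in> space m \<rightarrow> seq_space l" by (auto simp: space_m shift_def seq_space_def)
  fix y assume "y \<in> cylinders l"
  then obtain v where v: "y = cyl l v" by (auto simp: cylinders_def)
  have "shift -` y \<inter> space m = (\<Union>a\<le>l. cyl l (a # v))"
    unfolding v space_m by (rule shift_vimage_cyl)
  also have "\<dots> \<in> sets m" by (intro sets.finite_UN) (auto simp: cyl_sets)
  finally show "shift -` y \<inter> space m \<in> sets m" .
qed

lemma funpow_shift_measurable: "(shift ^^ k) \<in> measurable m m"
  by (induction k) (auto simp: funpow_Suc_right intro: measurable_compose[OF _ shift_measurable])

lemma shift_pre_sets: "B \<in> sets m \<Longrightarrow> shift_pre l k B \<in> sets m"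
  unfolding shift_pre_def using measurable_sets[OF funpow_shift_measurable] space_m by metis

text \<open>Cylinders together with the empty set form an intersection-stable generator
  of the sigma algebra; so two measures are equal once they agree on cylinders.\<close>
lemma Int_stable_cylinders: "Int_stable (insert {} (cylinders l))"
  unfolding Int_stable_def
proof (intro ballI)
  fix X Y assume X: "X \<in> insert {} (cylinders l)" and Y: "Y \<in> insert {} (cylinders l)"
  show "X \<inter> Y \<in> insert {} (cylinders l)"
  proof (cases "X = {} \<or> Y = {}")
    case False
    then obtain v u where v: "X = cyl l v" "v \<noteq> []" "set v \<subseteq> {..l}"
      and u: "Y = cyl l u" "u \<noteq> []" "set u \<subseteq> {..l}"
      using X Y by (auto simp: cylinders_def)
    show ?thesis
    proof (cases "length v \<le> length u")
      case True then show ?thesis using v u cyl_Int[OF True, of l] by (auto simp: cylinders_def)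
    next
      case False
      then have "length u \<le> length v" by simp
      then show ?thesis using v u cyl_Int[of u v l] by (auto simp: cylinders_def Int_commute)
    qed
  qed auto
qed

lemma measure_eq_on_cylinders:
  assumes sets1: "sets M1 = sets m" and sets2: "sets M2 = sets m"
    and eq: "\<And>w. w \<noteq> [] \<Longrightarrow> set w \<subseteq> {..l} \<Longrightarrow> emeasure M1 (cyl l w) = emeasure M2 (cyl l w)"
    and fin: "\<And>a. a \<le> l \<Longrightarrow> emeasure M1 (cyl l [a]) \<noteq> \<infinity>"
  shows "M1 = M2"
proof (rule measure_eqI_generator_eq[OF Int_stable_cylinders, of "seq_space l"])
  have gen: "sets m = sigma_sets (seq_space l) (insert {} (cylinders l))"
    unfolding sets_m by (rule sigma_sets_eqI) (auto intro: sigma_sets.Empty)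
  show "sets M1 = sigma_sets (seq_space l) (insert {} (cylinders l))"
    "sets M2 = sigma_sets (seq_space l) (insert {} (cylinders l))"
    using sets1 sets2 gen by simp_all
  show "insert {} (cylinders l) \<subseteq> Pow (seq_space l)"
    by (auto simp: cylinders_def cyl_def)
  show "emeasure M1 X = emeasure M2 X" if "X \<in> insert {} (cylinders l)" for X
    using that eq by (auto simp: cylinders_def)
  show "range (\<lambda>i. cyl l [min i l]) \<subseteq> insert {} (cylinders l)"
    by (auto simp: cylinders_def)
  show "(\<Union>i. cyl l [min i l]) = seq_space l"
    by (auto simp: cyl_def seq_space_def) (metis min.absorb1)
  show "emeasure M1 (cyl l [min i l]) \<noteq> \<infinity>" for i
    using fin by simp
qed

text \<open>Stationarity of \<open>p\<close> makes the shift measure preserving.\<close>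
lemma distr_shift: "distr m m shift = m"
proof (rule measure_eq_on_cylinders)
  fix v assume v: "v \<noteq> []" "set v \<subseteq> {..l}"
  then obtain x v' where xv: "v = x # v'" and xl: "x \<le> l" by (cases v) auto
  have disj: "disjoint_family_on (\<lambda>a. cyl l (a # v)) {..l}"
    by (auto simp: disjoint_family_on_def cyl_def)
  have "emeasure (distr m m shift) (cyl l v) = emeasure m (\<Union>a\<le>l. cyl l (a # v))"
    by (simp add: emeasure_distr shift_measurable cyl_sets space_m shift_vimage_cyl)
  also have "\<dots> = (\<Sum>a\<le>l. emeasure m (cyl l (a # v)))"
    using disj by (subst sum_emeasure[symmetric]) (auto simp: cyl_sets)
  also have "\<dots> = (\<Sum>a\<le>l. ennreal (p a * Q a x * qp Q v))"
    using v xv by (intro sum.cong refl) (simp add: emeasure_cyl mu_def mult.assoc)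
  also have "\<dots> = ennreal (\<Sum>a\<le>l. p a * Q a x * qp Q v)"
    using p_pos[THEN less_imp_le] Q_nonneg qp_nonneg[OF Q_nonneg v(2)] xl
    by (subst sum_ennreal) (auto intro!: mult_nonneg_nonneg)
  also have "(\<Sum>a\<le>l. p a * Q a x * qp Q v) = (\<Sum>a\<le>l. p a * Q a x) * qp Q v"
    by (simp add: sum_distrib_right)
  also have "\<dots> = emeasure m (cyl l v)"
    using p_stationary[OF xl] xv v by (simp add: mu_def emeasure_cyl)
  finally show "emeasure (distr m m shift) (cyl l v) = emeasure m (cyl l v)" .
next
  show "emeasure (distr m m shift) (cyl l [a]) \<noteq> \<infinity>" for a
    using finite_measure.emeasure_finite[OF finite_measure_m]
    by (simp add: emeasure_distr shift_measurable cyl_sets)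
qed simp_all

lemma emeasure_shift_pre: "B \<in> sets m \<Longrightarrow> emeasure m (shift_pre l k B) = emeasure m B"
proof (induction k)
  case 0
  then show ?case using sets.sets_into_space[of B m] space_m by (simp add: shift_pre_0 Int_absorb2)
next
  case (Suc k)
  have "emeasure m (shift_pre l 1 (shift_pre l k B)) = emeasure (distr m m shift) (shift_pre l k B)"
    using Suc.prems shift_pre_sets by (simp add: emeasure_distr shift_measurable shift_pre_def space_m)
  then show ?case using Suc by (simp add: distr_shift shift_pre_shift_pre)
qed

lemma measure_shift_pre: "B \<in> sets m \<Longrightarrow> measure m (shift_pre l k B) = measure m B"
  by (simp add: measure_def emeasure_shift_pre)

lemma measure_Inter_shift_pre_le:
  assumes "Suc k < N" "Y k \<in> sets m" "Y (Suc k) \<in> sets m"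
  shows "measure m (\<Inter>j<N. shift_pre l j (Y j)) \<le> measure m (Y k \<inter> shift_pre l 1 (Y (Suc k)))"
proof -
  have "(\<Inter>j<N. shift_pre l j (Y j)) \<subseteq> shift_pre l k (Y k \<inter> shift_pre l 1 (Y (Suc k)))"
    using assms(1) by (auto simp: shift_pre_Int shift_pre_shift_pre)
  moreover have T: "Y k \<inter> shift_pre l 1 (Y (Suc k)) \<in> sets m"
    using assms(2,3) by (intro sets.Int shift_pre_sets)
  ultimately have "measure m (\<Inter>j<N. shift_pre l j (Y j))
      \<le> measure m (shift_pre l k (Y k \<inter> shift_pre l 1 (Y (Suc k))))"
    by (intro measure_mono_m shift_pre_sets)
  then show ?thesis using measure_shift_pre[OF T] by simp
qed

text \<open>The conditioning identity on cylinders: after the word \<open>w\<close> ending in \<open>c\<close>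
  the chain restarts from \<open>c\<close>, with weight \<open>mu(w c) / p c\<close>.\<close>
lemma emeasure_cyl_shift_cyl:
  assumes w: "set w \<subseteq> {..l}" and c: "c \<le> l" and v: "v \<noteq> []" "set v \<subseteq> {..l}"
  shows "emeasure m (cyl l w \<inter> shift_pre l (length w) (cyl l [c] \<inter> cyl l v))
         = ennreal (mu Q p (w @ [c]) / p c) * emeasure m (cyl l [c] \<inter> cyl l v)"
proof (cases "hd v = c")
  case True
  have "emeasure m (cyl l w \<inter> shift_pre l (length w) (cyl l [c] \<inter> cyl l v)) = mu Q p (w @ v)"
    using True v w by (simp add: cyl_singleton_Int_cyl cyl_append emeasure_cyl)
  also have "mu Q p (w @ v) = mu Q p (w @ [c]) / p c * mu Q p v"
    using mu_append[OF v(1) True] p_pos[OF c] by simp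
  also have "ennreal \<dots> = ennreal (mu Q p (w @ [c]) / p c) * ennreal (mu Q p v)"
    using mu_nonneg[of "w @ [c]"] w c p_pos[OF c] mu_nonneg[OF v] by (intro ennreal_mult) simp_all
  also have "ennreal (mu Q p v) = emeasure m (cyl l [c] \<inter> cyl l v)"
    using True v by (simp add: cyl_singleton_Int_cyl emeasure_cyl)
  finally show ?thesis .
qed (use v in \<open>simp add: cyl_singleton_Int_cyl shift_pre_def\<close>)

text \<open>The conditioning identity for arbitrary measurable \<open>B\<close>: both sides are measures
  in \<open>B\<close> (an image of a restriction of \<open>m\<close>, and a density of \<open>m\<close>) that agree on
  cylinders.\<close>
lemma emeasure_cyl_shift_pre:
  assumes w: "set w \<subseteq> {..l}" and c: "c \<le> l" and B: "B \<in> sets m"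
  shows "emeasure m (cyl l w \<inter> shift_pre l (length w) (cyl l [c] \<inter> B))
         = ennreal (mu Q p (w @ [c]) / p c) * emeasure m (cyl l [c] \<inter> B)"
proof -
  define C where "C = cyl l (w @ [c])"
  define \<alpha> where "\<alpha> = mu Q p (w @ [c]) / p c"
  define M1 where "M1 = distr (restrict_space m C) m (shift ^^ length w)"
  define M2 where "M2 = density m (\<lambda>x. ennreal \<alpha> * indicator (cyl l [c]) x)"
  have C: "C \<in> sets m" "C \<subseteq> space m" unfolding C_def by (auto simp: cyl_sets cyl_subset space_m)
  have M1: "emeasure M1 X = emeasure m (cyl l w \<inter> shift_pre l (length w) (cyl l [c] \<inter> X))"
    if X: "X \<in> sets m" for X
  proof -
    have "(shift ^^ length w) \<in> measurable (restrict_space m C) m"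
      by (intro measurable_restrict_space1 funpow_shift_measurable)
    then have "emeasure M1 X = emeasure m (C \<inter> (shift ^^ length w) -` X)"
      using C X by (simp add: M1_def emeasure_distr emeasure_restrict_space space_restrict_space
          Int_absorb2 Int_commute)
    also have "C \<inter> (shift ^^ length w) -` X = C \<inter> shift_pre l (length w) X"
      using C by (auto simp: shift_pre_def space_m)
    finally show ?thesis by (simp add: C_def cyl_snoc_Int)
  qed
  have M2: "emeasure M2 X = ennreal \<alpha> * emeasure m (cyl l [c] \<inter> X)" if X: "X \<in> sets m" for X
  proof -
    have "emeasure M2 X = (\<integral>\<^sup>+ x. ennreal \<alpha> * indicator (cyl l [c] \<inter> X) x \<partial>m)"
      unfolding M2_def using X cyl_sets[of "[c]"]
      by (simp add: emeasure_density indicator_inter_arith mult.assoc)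
    then show ?thesis using X cyl_sets by (simp add: nn_integral_cmult_indicator)
  qed
  have "M1 = M2"
  proof (rule measure_eq_on_cylinders)
    show "emeasure M1 (cyl l v) = emeasure M2 (cyl l v)" if "v \<noteq> []" "set v \<subseteq> {..l}" for v
      using that M1 M2 cyl_sets emeasure_cyl_shift_cyl[OF w c that] by (simp add: \<alpha>_def)
    show "emeasure M1 (cyl l [a]) \<noteq> \<infinity>" for a
      using M1[OF cyl_sets] finite_measure.emeasure_finite[OF finite_measure_m] by simp
  qed (simp_all add: M1_def M2_def)
  then show ?thesis using M1[OF B] M2[OF B] by (simp add: \<alpha>_def)
qed

lemma measure_cyl_shift_pre:
  assumes w: "set w \<subseteq> {..l}" and c: "c \<le> l" and B: "B \<in> sets m" "B \<subseteq> cyl l [c]"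
  shows "measure m (cyl l w \<inter> shift_pre l (length w) B) = mu Q p (w @ [c]) / p c * measure m B"
proof -
  have "cyl l [c] \<inter> B = B" using B(2) by blast
  moreover have "0 \<le> mu Q p (w @ [c]) / p c"
    using mu_nonneg[of "w @ [c]"] w c p_pos[OF c] by simp
  ultimately show ?thesis
    using emeasure_cyl_shift_pre[OF w c B(1)] by (simp add: measure_def enn2real_mult)
qed

end

locale markov_partition = markov_measure +
  fixes n :: nat and P :: "nat \<Rightarrow> (nat \<Rightarrow> nat) set"
  assumes part: "is_partition l m n P"
    and cond_i: "\<forall>i\<le>n. (\<exists>a\<le>l. P i \<subseteq> cyl l [a])
                   \<or> (shift_pre l 1 (P i) = P i \<and> measure m (P i) = 0)"
    and cond_ii: "\<forall>i\<le>n. \<forall>j\<le>n.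
                   (\<exists>a\<le>l. P i \<inter> shift_pre l 1 (P j) = cyl l [a] \<inter> shift_pre l 1 (P j))
                   \<or> measure m (P i \<inter> shift_pre l 1 (P j)) = 0"
begin

lemma P_sets: "i \<le> n \<Longrightarrow> P i \<in> sets m" using part by (simp add: is_partition_def)
lemma P_cover: "(\<Union>i\<le>n. P i) = seq_space l" using part by (simp add: is_partition_def)

subsection \<open>The partition is generating\<close>

definition GS :: "(nat \<Rightarrow> nat) set set" where
  "GS = sigma_sets (seq_space l) {shift_pre l k (P i) | k i. i \<le> n}"

lemma GS_sigma_algebra: "sigma_algebra (seq_space l) GS"
  unfolding GS_def by (rule sigma_algebra_sigma_sets) (auto simp: shift_pre_def)

lemma GS_sets: "GS \<subseteq> sets m"
proof -
  have "{shift_pre l k (P i) | k i. i \<le> n} \<subseteq> sets m" using P_sets shift_pre_sets by auto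
  then show ?thesis unfolding GS_def using sets.sigma_sets_subset[of _ m] space_m by auto
qed

definition P_in_cyl :: "nat \<Rightarrow> (nat \<Rightarrow> nat) set" where
  "P_in_cyl a = (\<Union>i\<in>{i. i \<le> n \<and> P i \<subseteq> cyl l [a]}. P i)"

definition P_null :: "(nat \<Rightarrow> nat) set" where
  "P_null = (\<Union>i\<in>{i. i \<le> n \<and> measure m (P i) = 0}. P i)"

lemma P_null_null: "P_null \<in> null_sets m"
  unfolding P_null_def using P_sets measure_zero_null by (intro null_sets_UN') auto

lemma shift_pre_P_in_cyl_GS: "shift_pre l k (P_in_cyl a) \<in> GS"
proof -
  interpret sigma_algebra "seq_space l" GS by (rule GS_sigma_algebra)
  have "shift_pre l k (P_in_cyl a) = (\<Union>i\<in>{i. i \<le> n \<and> P i \<subseteq> cyl l [a]}. shift_pre l k (P i))"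
    unfolding P_in_cyl_def by (rule shift_pre_UN)
  also have "\<dots> \<in> GS" by (intro finite_UN) (auto simp: GS_def)
  finally show ?thesis .
qed

lemma cyl_iff_P_in_cyl:
  assumes "x \<in> seq_space l" "x \<notin> P_null"
  shows "x \<in> cyl l [a] \<longleftrightarrow> x \<in> P_in_cyl a"
proof
  assume a: "x \<in> cyl l [a]"
  obtain i where i: "i \<le> n" "x \<in> P i" using P_cover assms(1) by auto
  then have "measure m (P i) \<noteq> 0" using assms(2) by (auto simp: P_null_def)
  then obtain b where "P i \<subseteq> cyl l [b]" using cond_i i by auto
  moreover have "b = a" using i a calculation by (auto simp: cyl_def)
  ultimately show "x \<in> P_in_cyl a" using i by (auto simp: P_in_cyl_def)
qed (auto simp: P_in_cyl_def)

text \<open>Every cylinder is, up to a null set, a finite intersection of sets in \<open>GS\<close>.\<close>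
lemma cyl_approx:
  assumes "w \<noteq> []"
  shows "\<exists>A'\<in>GS. (A' - cyl l w) \<union> (cyl l w - A') \<in> null_sets m"
proof -
  interpret G: sigma_algebra "seq_space l" GS by (rule GS_sigma_algebra)
  define A' where "A' = (\<Inter>k<length w. shift_pre l k (P_in_cyl (w ! k)))"
  define N where "N = (\<Union>k<length w. shift_pre l k P_null)"
  have A': "A' \<in> GS" unfolding A'_def using assms shift_pre_P_in_cyl_GS by (intro G.finite_INT) auto
  have N: "N \<in> null_sets m" unfolding N_def
    using P_null_null by (intro null_sets_UN') (auto simp: null_sets_def shift_pre_sets emeasure_shift_pre)
  have "(A' - cyl l w) \<union> (cyl l w - A') \<subseteq> N"
  proof
    fix s assume s: "s \<in> (A' - cyl l w) \<union> (cyl l w - A')"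
    then have sS: "s \<in> seq_space l" using A' G.sets_into_space cyl_subset by blast
    show "s \<in> N"
    proof (rule ccontr)
      assume "s \<notin> N"
      then have "\<forall>k<length w. (shift ^^ k) s \<notin> P_null" using sS by (auto simp: N_def shift_pre_def)
      then have "\<forall>k<length w. s \<in> shift_pre l k (cyl l [w ! k]) \<longleftrightarrow> s \<in> shift_pre l k (P_in_cyl (w ! k))"
        using cyl_iff_P_in_cyl shift_space[OF sS] sS by (auto simp: shift_pre_def)
      then have "s \<in> cyl l w \<longleftrightarrow> s \<in> A'"
        unfolding A'_def using cyl_as_Inter[of l w] sS assms by auto
      then show False using s by auto
    qed
  qed
  moreover have "(A' - cyl l w) \<union> (cyl l w - A') \<in> sets m"
    using A' GS_sets cyl_sets by auto
  ultimately show ?thesis using null_sets_subset[OF N] A' by blast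
qed

text \<open>Sigma-induction: the sets approximable by \<open>GS\<close> up to null sets contain the
  cylinders and are closed under complements and countable unions.\<close>
lemma sets_approx: "B \<in> sets m \<Longrightarrow> \<exists>A'\<in>GS. (A' - B) \<union> (B - A') \<in> null_sets m"
  unfolding sets_m
proof (induction rule: sigma_sets.induct)
  case (Basic a)
  then show ?case using cyl_approx by (auto simp: cylinders_def)
next
  case Empty
  then show ?case by (intro bexI[of _ "{}"]) (auto simp: GS_def intro: sigma_sets.Empty)
next
  case (Compl a)
  then obtain A where A: "A \<in> GS" "(A - a) \<union> (a - A) \<in> null_sets m" by blast
  have "seq_space l - A \<in> GS" using A(1) unfolding GS_def by (rule sigma_sets.Compl)
  moreover have "((seq_space l - A) - (seq_space l - a)) \<union> ((seq_space l - a) - (seq_space l - A))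
     = (A - a) \<union> (a - A)"
    using A(1) GS_sets Compl.hyps sets.sets_into_space[of _ m] space_m sets_m by auto
  ultimately show ?case using A(2) by metis
next
  case (Union a)
  then obtain f where f: "\<And>i. f i \<in> GS" "\<And>i. (f i - a i) \<union> (a i - f i) \<in> null_sets m"
    by metis
  have fU: "(\<Union>i. f i) \<in> GS" using f(1) unfolding GS_def by (intro sigma_sets.Union) auto
  have aU: "(\<Union>i. a i) \<in> sets m" using Union.hyps sets_m by (metis sigma_sets.Union)
  have "(\<Union>i. (f i - a i) \<union> (a i - f i)) \<in> null_sets m" using f(2) by auto
  moreover have "((\<Union>i. f i) - (\<Union>i. a i)) \<union> ((\<Union>i. a i) - (\<Union>i. f i))
      \<subseteq> (\<Union>i. (f i - a i) \<union> (a i - f i))"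
    by blast
  moreover have "((\<Union>i. f i) - (\<Union>i. a i)) \<union> ((\<Union>i. a i) - (\<Union>i. f i)) \<in> sets m"
    using fU GS_sets aU by auto
  ultimately show ?case using fU null_sets_subset by blast
qed

lemma generating: "generating l m n P"
  unfolding generating_def
proof
  fix B assume "B \<in> sets m"
  then obtain A' where "A' \<in> GS" "(A' - B) \<union> (B - A') \<in> null_sets m" using sets_approx by blast
  then show "\<exists>A'\<in>sigma_sets (seq_space l) {shift_pre l k (P i) |k i. i \<le> n}.
            measure m (A' - B \<union> (B - A')) = 0"
    unfolding GS_def by (intro bexI[of _ A']) (auto simp: measure_def null_sets_def)
qed

subsection \<open>The partition is Markov\<close>

lemma positive_transition:
  assumes ij: "i \<le> n" "j \<le> n" and pos: "0 < measure m (P i \<inter> shift_pre l 1 (P j))"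
  obtains c where "c \<le> l" "P i \<subseteq> cyl l [c]"
    "P i \<inter> shift_pre l 1 (P j) = cyl l [c] \<inter> shift_pre l 1 (P j)"
proof -
  obtain c where c: "c \<le> l" "P i \<inter> shift_pre l 1 (P j) = cyl l [c] \<inter> shift_pre l 1 (P j)"
    using cond_ii ij pos by force
  have "measure m (P i \<inter> shift_pre l 1 (P j)) \<le> measure m (P i)"
    using P_sets[OF ij(1)] by (intro measure_mono_m) auto
  then obtain b where b: "P i \<subseteq> cyl l [b]" using cond_i ij(1) pos by fastforce
  have "P i \<inter> shift_pre l 1 (P j) \<noteq> {}" using pos by auto
  then obtain s where "s \<in> P i \<inter> shift_pre l 1 (P j)" by blast
  then have "b = c" using b c(2) by (auto simp: cyl_def)
  then show ?thesis using that c b by blast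
qed

lemma conditional_transition:
  assumes w: "set w \<subseteq> {..l}" and ij: "i \<le> n" "j \<le> n"
    and pos: "0 < measure m (cyl l w \<inter> shift_pre l (length w) (P i))"
  shows "measure m (cyl l w \<inter> shift_pre l (length w) (P i \<inter> shift_pre l 1 (P j)))
           / measure m (cyl l w \<inter> shift_pre l (length w) (P i))
         = measure m (P i \<inter> shift_pre l 1 (P j)) / measure m (P i)"
proof -
  define Z where "Z = P i \<inter> shift_pre l 1 (P j)"
  have Z: "Z \<in> sets m" unfolding Z_def using ij by (intro sets.Int shift_pre_sets P_sets)
  show ?thesis
  proof (cases "measure m Z = 0")
    case True
    txt \<open>A null transition makes both quotients vanish.\<close>
    have "measure m (cyl l w \<inter> shift_pre l (length w) Z) \<le> measure m (shift_pre l (length w) Z)"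
      using Z by (intro measure_mono_m shift_pre_sets) auto
    then have "measure m (cyl l w \<inter> shift_pre l (length w) Z) = 0"
      using True measure_shift_pre[OF Z] measure_nonneg[of m] by (metis order_antisym)
    then show ?thesis using True by (simp add: Z_def)
  next
    case False
    txt \<open>Otherwise \<open>P i \<subseteq> C_c\<close>, and both sides are weighted by the same factor.\<close>
    then have "0 < measure m (P i \<inter> shift_pre l 1 (P j))"
      using measure_nonneg[of m Z] unfolding Z_def by linarith
    then obtain c where c: "c \<le> l" "P i \<subseteq> cyl l [c]"
      using positive_transition[OF ij] by metis
    have "Z \<subseteq> P i" by (simp add: Z_def)
    then have "measure m (cyl l w \<inter> shift_pre l (length w) Z) = mu Q p (w @ [c]) / p c * measure m Z"
      using measure_cyl_shift_pre[OF w c(1) Z] c(2) by auto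
    moreover have mP: "measure m (cyl l w \<inter> shift_pre l (length w) (P i))
        = mu Q p (w @ [c]) / p c * measure m (P i)"
      using measure_cyl_shift_pre[OF w c(1) P_sets[OF ij(1)] c(2)] .
    moreover have "mu Q p (w @ [c]) / p c \<noteq> 0" "measure m (P i) \<noteq> 0"
      using pos mP by auto
    ultimately show ?thesis by (simp add: Z_def)
  qed
qed

text \<open>The Markov property: a positive chain \<open>P_{i_0} \<inter> \<dots> \<inter> \<sigma>\<^sup>-\<^sup>M P_{i_M}\<close> has only
  positive, hence cylinder-determined, inner transitions, so it equals
  \<open>C_w \<inter> \<sigma>\<^sup>-\<^sup>M P_{i_M}\<close> and the last step is a conditional transition.\<close>
lemma markov: "markov_property l m n P"
  unfolding markov_property_def
proof (intro allI impI)
  fix N :: nat and idx :: "nat \<Rightarrow> nat"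
  assume "1 \<le> N" and idx: "\<forall>k\<le>N. idx k \<le> n"
    and pos: "0 < measure m (\<Inter>k<N. shift_pre l k (P (idx k)))"
  then obtain M where N: "N = Suc M" by (cases N) auto
  define Y where "Y k = P (idx k)" for k
  have Y: "k \<le> N \<Longrightarrow> Y k \<in> sets m" for k using idx P_sets by (simp add: Y_def)
  have "\<exists>a. a \<le> l \<and> Y k \<inter> shift_pre l 1 (Y (Suc k)) = cyl l [a] \<inter> shift_pre l 1 (Y (Suc k))"
    if k: "k < M" for k
  proof -
    have "measure m (\<Inter>j<N. shift_pre l j (Y j)) \<le> measure m (Y k \<inter> shift_pre l 1 (Y (Suc k)))"
      using k N by (intro measure_Inter_shift_pre_le Y) auto
    then have "0 < measure m (P (idx k) \<inter> shift_pre l 1 (P (idx (Suc k))))"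
      using pos by (simp add: Y_def)
    moreover have "idx k \<le> n" "idx (Suc k) \<le> n" using idx k N by auto
    ultimately show ?thesis using positive_transition unfolding Y_def by metis
  qed
  then obtain a where a: "\<And>k. k < M \<Longrightarrow> a k \<le> l \<and>
      Y k \<inter> shift_pre l 1 (Y (Suc k)) = cyl l [a k] \<inter> shift_pre l 1 (Y (Suc k))"
    by metis
  define w where "w = map a [0..<M]"
  have w: "set w \<subseteq> {..l}" "length w = M" using a by (auto simp: w_def)
  have D: "(\<Inter>k<N. shift_pre l k (Y k)) = cyl l w \<inter> shift_pre l M (Y M)"
    using Inter_shift_pre_chain[of M Y l a] a N by (simp add: w_def lessThan_Suc_atMost)
  have "(\<Inter>k\<le>N. shift_pre l k (Y k)) = (\<Inter>k<N. shift_pre l k (Y k)) \<inter> shift_pre l N (Y N)"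
    by (simp add: lessThan_Suc_atMost[symmetric] lessThan_Suc Int_commute)
  also have "\<dots> = cyl l w \<inter> shift_pre l M (Y M \<inter> shift_pre l 1 (Y N))"
    unfolding D using N by (simp add: shift_pre_Int shift_pre_shift_pre Int_assoc)
  finally have D': "(\<Inter>k\<le>N. shift_pre l k (Y k)) = cyl l w \<inter> shift_pre l M (Y M \<inter> shift_pre l 1 (Y N))" .
  have "idx M \<le> n" "idx N \<le> n" using idx N by auto
  from conditional_transition[OF w(1) this] pos D D' w(2)
  show "measure m (\<Inter>k\<le>N. shift_pre l k (P (idx k))) / measure m (\<Inter>k<N. shift_pre l k (P (idx k)))
      = measure m (P (idx (N - 1)) \<inter> shift_pre l 1 (P (idx N))) / measure m (P (idx (N - 1)))"
    by (simp add: Y_def N)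
qed

end

theorem lemma4:
  fixes l n :: nat and Q :: "nat \<Rightarrow> nat \<Rightarrow> real" and p :: "nat \<Rightarrow> real"
    and m :: "(nat \<Rightarrow> nat) measure" and P :: "nat \<Rightarrow> (nat \<Rightarrow> nat) set"
  assumes ms: "markov_shift l Q p m"
    and part: "is_partition l m n P"
    and cond_i: "\<forall>i\<le>n. (\<exists>a\<le>l. P i \<subseteq> cyl l [a])
                   \<or> (shift_pre l 1 (P i) = P i \<and> measure m (P i) = 0)"
    and cond_ii: "\<forall>i\<le>n. \<forall>j\<le>n.
                   (\<exists>a\<le>l. P i \<inter> shift_pre l 1 (P j) = cyl l [a] \<inter> shift_pre l 1 (P j))
                   \<or> measure m (P i \<inter> shift_pre l 1 (P j)) = 0"
  shows "generating l m n P \<and> markov_property l m n P"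
proof -
  interpret markov_partition l Q p m n P
    using ms part cond_i cond_ii by unfold_locales
  show ?thesis using generating markov by simp
qed

end
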